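(* Let $q>2$ be a prime power, $m\ge1$, $n=q^m-1=r_1r_2$ with $r_1,r_2>1$, $\gcd(r_1,r_2)=1$ and $r_1=q^a-1$ for some natural number $a$. Let $T=(T_1,T_2):\mathbb{Z}_n\to\mathbb{Z}_{r_1}\times\mathbb{Z}_{r_2}$ be a group isomorphism, let $D^*=\Omega(1)\cup B_1\cup B_2\subseteq\mathbb{Z}_n$ where $\Omega(1)=\{q^i\mid 0\le i<m\}$, $B_1=\{2q^i\mid0\le i<m\}$, $B_2=\{q^i+q^j\mid 0\le i<j<m\}$, let $\overline{D^*}$ be a suitable set of representatives of $D^*$ with $1,2\in\overline{D^*}$, and let $\mathcal{U}$ be a complete set of representatives of the $\sim$-classes of $\overline{D^*}$ with $1,2\in\mathcal{U}$. Then $$|\mathcal{U}|=2+\left|\{C_{r_1}(T_1(e))\mid e\in\mathcal{U}\cap B_2\}\right|=2+\left\lfloor a/2\right\rfloor.$$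
   Context: For integers $x,r$, $C_r(x)=\{xq^i\bmod r\mid i\in\mathbb{N}\}$ is the $q$-cyclotomic coset of $x$ modulo $r$. The $q$-orbit of $(x_1,x_2)\in\mathbb{Z}_{r_1}\times\mathbb{Z}_{r_2}$ is $\{(x_1q^i,x_2q^i)\mid i\in\mathbb{N}\}$. If $D\subseteq\mathbb{Z}_{r_1}\times\mathbb{Z}_{r_2}$ is a union of $q$-orbits, a complete set of representatives $\overline{D}$ of its $q$-orbits is a set of restricted representatives if its projection onto $\mathbb{Z}_{r_1}$ is a complete set of representatives of the $q$-cyclotomic cosets modulo $r_1$ contained in the projection of $D$ onto $\mathbb{Z}_{r_1}$. A complete set of representatives $\overline{D^*}\subseteq D^*$ of the $q$-cyclotomic cosets modulo $n$ in $D^*$ is suitable if $T(\overline{D^*})$ is a set of restricted representatives of the $q$-orbits in $T(D^* )$. On $\overline{D^*}$, $x\sim y$ iff $x\equiv y\pmod{r_1}$. *)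

theory Defs
  imports "HOL-Computational_Algebra.Primes"
begin

text \<open>Elements of Z_r are represented by natural numbers in {0..<r}.\<close>

definition cyc :: "nat \<Rightarrow> nat \<Rightarrow> nat \<Rightarrow> nat set" where
  "cyc q r x = {x * q ^ i mod r | i. True}"

definition qorbit :: "nat \<Rightarrow> nat \<Rightarrow> nat \<Rightarrow> nat \<times> nat \<Rightarrow> (nat \<times> nat) set" where
  "qorbit q r1 r2 x = {(fst x * q ^ i mod r1, snd x * q ^ i mod r2) | i. True}"

definition complete_reps :: "('a \<Rightarrow> 'a set) \<Rightarrow> 'a set \<Rightarrow> 'a set \<Rightarrow> bool" where
  "complete_reps cls D R \<longleftrightarrow> R \<subseteq> D \<and> (\<forall>x\<in>D. \<exists>!y. y \<in> R \<and> x \<in> cls y)"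

definition restricted_reps :: "nat \<Rightarrow> nat \<Rightarrow> nat \<Rightarrow> (nat \<times> nat) set \<Rightarrow> (nat \<times> nat) set \<Rightarrow> bool" where
  "restricted_reps q r1 r2 D R \<longleftrightarrow>
     complete_reps (qorbit q r1 r2) D R \<and> complete_reps (cyc q r1) (fst ` D) (fst ` R)"

definition suitable :: "nat \<Rightarrow> nat \<Rightarrow> nat \<Rightarrow> nat \<Rightarrow> (nat \<Rightarrow> nat \<times> nat) \<Rightarrow> nat set \<Rightarrow> nat set \<Rightarrow> bool" where
  "suitable q n r1 r2 T Dstar Dbar \<longleftrightarrow>
     complete_reps (cyc q n) Dstar Dbar \<and> restricted_reps q r1 r2 (T ` Dstar) (T ` Dbar)"

definition zn_iso :: "nat \<Rightarrow> nat \<Rightarrow> nat \<Rightarrow> (nat \<Rightarrow> nat \<times> nat) \<Rightarrow> bool" where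
  "zn_iso n r1 r2 T \<longleftrightarrow>
     bij_betw T {0..<n} ({0..<r1} \<times> {0..<r2}) \<and>
     (\<forall>x<n. \<forall>y<n. T ((x + y) mod n) =
        ((fst (T x) + fst (T y)) mod r1, (snd (T x) + snd (T y)) mod r2))"

definition Omega1 :: "nat \<Rightarrow> nat \<Rightarrow> nat set" where
  "Omega1 q m = {q ^ i mod (q ^ m - 1) | i. i < m}"

definition B1 :: "nat \<Rightarrow> nat \<Rightarrow> nat set" where
  "B1 q m = {2 * q ^ i mod (q ^ m - 1) | i. i < m}"

definition B2 :: "nat \<Rightarrow> nat \<Rightarrow> nat set" where
  "B2 q m = {(q ^ i + q ^ j) mod (q ^ m - 1) | i j. i < j \<and> j < m}"

definition Dstar :: "nat \<Rightarrow> nat \<Rightarrow> nat set" where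
  "Dstar q m = Omega1 q m \<union> B1 q m \<union> B2 q m"

end

theory Submission
  imports Defs "HOL-Number_Theory.Cong"
begin

(*
  T_1 is multiplication by the unit u = T_1(1) modulo r1 = q^a - 1. Hence two elements of Dbar are
  ~-equivalent iff they have the same T_1-image, and since T(Dbar) is a set of restricted
  representatives, e |-> C_r1(T_1(e)) maps U bijectively onto the q-cyclotomic cosets modulo r1
  met by u D*. Multiplication by u permutes cosets, and as q^a = 1 modulo r1 every element of D*
  lies, up to a power of q, in the coset of 1, of 2, or of 1 + q^k with 1 <= k <= a/2. These
  2 + a/2 cosets are distinct: for q > 2 all sums q^j + q^l with j <> l < a stay below q^a - 1,
  so a coincidence of cosets becomes an equality of base-q expansions. Finally 1 and 2 already
  represent the cosets of Omega(1) and B_1 in Dbar, so all other elements of U lie in B_2.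
*)

section \<open>Cyclotomic cosets\<close>

lemma mod_in_cyc: "x mod r \<in> cyc q r x"
  unfolding cyc_def by (auto intro!: exI[of _ 0])

lemma cyc_cong:
  assumes "[x = y] (mod r)"
  shows "cyc q r x = cyc q r y"
proof -
  have "x * q ^ i mod r = y * q ^ i mod r" for i
    using cong_scalar_right[OF assms] by (simp add: cong_def)
  then show ?thesis
    unfolding cyc_def by simp
qed

lemma cyc_mod: "cyc q r (x mod r) = cyc q r x"
  by (rule cyc_cong) (simp add: cong_def)

lemma cyc_mod_dvd:
  assumes "r dvd n"
  shows "cyc q r (x mod n) = cyc q r x"
  using assms by (intro cyc_cong) (simp add: cong_def mod_mod_cancel)

lemma cyc_mult: "cyc q r (x * u) = (\<lambda>z. z * u mod r) ` cyc q r x"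
proof -
  have "x * u * q ^ i mod r = (x * q ^ i mod r) * u mod r" for i
    by (metis mod_mult_left_eq mult.assoc mult.commute)
  then show ?thesis
    unfolding cyc_def by auto
qed

lemma cyc_mult_cancel:
  assumes "coprime u r" and "cyc q r (x * u) = cyc q r (y * u)"
  shows "cyc q r x = cyc q r y"
proof -
  obtain w where w: "[u * w = 1] (mod r)"
    using cong_solve_coprime_nat[OF assms(1)] by auto
  have inverse: "cyc q r (z * u * w) = cyc q r z" for z
    using cong_scalar_left[OF w, of z] by (intro cyc_cong) (simp add: mult.assoc)
  have "cyc q r x = (\<lambda>z. z * w mod r) ` cyc q r (x * u)"
    by (simp add: inverse cyc_mult[symmetric])
  also have "\<dots> = cyc q r y"
    by (simp add: assms(2) inverse cyc_mult[symmetric])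
  finally show ?thesis .
qed

lemma card_cyc_image_mult:
  assumes "coprime u r"
  shows "card ((\<lambda>e. cyc q r (e * u)) ` D) = card (cyc q r ` D)"
proof -
  let ?M = "\<lambda>C. (\<lambda>z. z * u mod r) ` C"
  have "(\<lambda>e. cyc q r (e * u)) ` D = ?M ` cyc q r ` D"
    by (simp add: cyc_mult image_image)
  moreover have "inj_on ?M (cyc q r ` D)"
  proof (rule inj_onI)
    fix C C' assume "C \<in> cyc q r ` D" "C' \<in> cyc q r ` D" and M: "?M C = ?M C'"
    then obtain x y where C: "C = cyc q r x" and C': "C' = cyc q r y"
      by blast
    have "cyc q r (x * u) = cyc q r (y * u)"
      using M unfolding C C' cyc_mult .
    then show "C = C'"
      unfolding C C' by (rule cyc_mult_cancel[OF assms])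
  qed
  ultimately show ?thesis
    by (simp add: card_image)
qed

context
  fixes q a r :: nat
  assumes period: "[q ^ a = 1] (mod r)" and a_pos: "0 < a"
begin

lemma pow_cong_pow_mod: "[q ^ i = q ^ (i mod a)] (mod r)"
proof -
  have "[(q ^ a) ^ (i div a) * q ^ (i mod a) = 1 ^ (i div a) * q ^ (i mod a)] (mod r)"
    by (intro cong_scalar_right cong_pow period)
  then show ?thesis
    by (simp flip: power_mult power_add)
qed

lemma cyc_pow_mult: "cyc q r (q ^ i * x) = cyc q r x"
proof
  show "cyc q r (q ^ i * x) \<subseteq> cyc q r x"
  proof
    fix z assume "z \<in> cyc q r (q ^ i * x)"
    then obtain j where "z = q ^ i * x * q ^ j mod r"
      unfolding cyc_def by auto
    also have "q ^ i * x * q ^ j = x * q ^ (i + j)"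
      by (simp add: power_add)
    finally show "z \<in> cyc q r x"
      unfolding cyc_def by blast
  qed
  show "cyc q r x \<subseteq> cyc q r (q ^ i * x)"
  proof
    fix z assume "z \<in> cyc q r x"
    then obtain j where z: "z = x * q ^ j mod r"
      unfolding cyc_def by auto
    have "[x * q ^ j * (q ^ a) ^ i = x * q ^ j * 1 ^ i] (mod r)"
      by (intro cong_scalar_left cong_pow period)
    moreover have "(q ^ a) ^ i = q ^ i * q ^ ((a - 1) * i)"
    proof -
      have "a * i = i + (a - 1) * i"
        using a_pos by (simp add: diff_mult_distrib)
      then show ?thesis
        by (simp add: power_add flip: power_mult)
    qed
    ultimately have "z = q ^ i * x * q ^ (j + (a - 1) * i) mod r"
      using z by (simp add: cong_def power_add mult.assoc mult.left_commute)
    then show "z \<in> cyc q r (q ^ i * x)"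
      unfolding cyc_def by blast
  qed
qed

lemma cyc_eq_iff_mod_in_cyc: "x mod r \<in> cyc q r y \<longleftrightarrow> cyc q r x = cyc q r y"
proof
  assume "x mod r \<in> cyc q r y"
  then obtain i where "[x = q ^ i * y] (mod r)"
    unfolding cyc_def cong_def by (auto simp: ac_simps)
  then show "cyc q r x = cyc q r y"
    by (simp add: cyc_cong cyc_pow_mult)
qed (metis mod_in_cyc)

lemma cyc_eq_imp_cong_pow:
  assumes "cyc q r x = cyc q r y"
  shows "\<exists>j<a. [x = q ^ j * y] (mod r)"
proof -
  obtain i where "[x = y * q ^ i] (mod r)"
    using mod_in_cyc[of x r q] assms unfolding cyc_def cong_def by auto
  moreover have "[y * q ^ i = q ^ (i mod a) * y] (mod r)"
    using cong_scalar_left[OF pow_cong_pow_mod] by (simp add: ac_simps)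
  ultimately show ?thesis
    using a_pos cong_trans by (intro exI[of _ "i mod a"]) auto
qed

end

section \<open>Cosets modulo q^a - 1 met by D*\<close>

lemma pow_cong_one_mod_pow_minus_one:
  fixes q a :: nat
  assumes "0 < q"
  shows "[q ^ a = 1] (mod q ^ a - 1)"
proof -
  have "0 < q ^ a"
    using assms by simp
  then have "q ^ a = (q ^ a - 1) + 1"
    by simp
  then show ?thesis
    by (metis cong_def mod_add_self1)
qed

lemma not_dvd_one_plus_pow:
  fixes q :: nat
  assumes "2 \<le> q" and "0 < k"
  shows "\<not> q dvd 1 + q ^ k"
  using assms dvd_add_left_iff[of q "q ^ k" 1] by simp

lemma one_plus_pow_ne_pow:
  fixes q :: nat
  assumes "2 \<le> q" and "0 < k"
  shows "1 + q ^ k \<noteq> q ^ j"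
  using not_dvd_one_plus_pow[OF assms] assms by (cases j) auto

lemma one_plus_pow_eq_pows:
  fixes q :: nat
  assumes "2 \<le> q" and "0 < k" and "1 + q ^ k = q ^ j + q ^ l"
  shows "j = 0 \<and> l = k \<or> j = k \<and> l = 0"
proof -
  have "j = 0 \<or> l = 0"
  proof (rule ccontr)
    assume "\<not> (j = 0 \<or> l = 0)"
    then have "q dvd q ^ j + q ^ l"
      by simp
    then show False
      using not_dvd_one_plus_pow[OF assms(1,2)] assms(3) by simp
  qed
  then show ?thesis
    using assms by auto
qed

definition coset_leaders :: "nat \<Rightarrow> nat \<Rightarrow> nat set" where
  "coset_leaders q a = {1, 2} \<union> (\<lambda>k. 1 + q ^ k) ` {1..a div 2}"

lemma card_coset_leaders:
  fixes q :: nat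
  assumes "2 \<le> q"
  shows "card (coset_leaders q a) = 2 + a div 2"
proof -
  let ?A = "(\<lambda>k. 1 + q ^ k) ` {1..a div 2}"
  have "inj_on (\<lambda>k. 1 + q ^ k) {1..a div 2}"
    using assms by (auto intro!: inj_onI)
  then have "card ?A = a div 2"
    by (simp add: card_image)
  moreover have "x \<notin> ?A" if "x \<le> 2" for x
  proof
    assume "x \<in> ?A"
    then obtain k where "1 \<le> k" and "x = 1 + q ^ k"
      by auto
    then show False
      using that assms self_le_power[of q k] by linarith
  qed
  ultimately show ?thesis
    unfolding coset_leaders_def by (simp add: card_insert_disjoint)
qed

lemma coset_leaders_mod_in_Dstar:
  assumes "x \<in> coset_leaders q a" and "0 < a" and "a \<le> m"
  shows "x mod (q ^ m - 1) \<in> Dstar q m"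
proof -
  have "1 mod (q ^ m - 1) \<in> Omega1 q m" and "2 mod (q ^ m - 1) \<in> B1 q m"
    using assms(2,3) unfolding Omega1_def B1_def by (auto intro!: exI[of _ 0])
  moreover have "(q ^ 0 + q ^ k) mod (q ^ m - 1) \<in> B2 q m" if "k \<in> {1..a div 2}" for k
  proof -
    have "0 < k" and "k < m"
      using that assms(2,3) by auto
    then show ?thesis
      unfolding B2_def by blast
  qed
  ultimately show ?thesis
    using assms(1) unfolding coset_leaders_def Dstar_def by auto
qed

context
  fixes q :: nat
  assumes q3: "3 \<le> q"
begin

lemma pow_less_pow_minus_one:
  assumes "i < a"
  shows "q ^ i < q ^ a - 1"
proof -
  have "q ^ i \<le> q ^ (a - 1)"
    using assms q3 by (intro power_increasing) auto
  moreover have "q ^ a = q * q ^ (a - 1)"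
    using assms by (cases a) auto
  moreover have "1 \<le> q ^ (a - 1)"
    using q3 by simp
  ultimately show ?thesis
    using q3 mult_le_mono1[OF q3, of "q ^ (a - 1)"] by linarith
qed

lemma pows_add_less_pow_minus_one:
  assumes "j \<noteq> l" and "j < a" and "l < a"
  shows "q ^ j + q ^ l < q ^ a - 1"
proof -
  have less: "q ^ j + q ^ l < q ^ a - 1" if "j < l" "l < a" for j l
  proof -
    define P where "P = q ^ (a - 2)"
    have "a = Suc (Suc (a - 2))"
      using that by linarith
    then have "q ^ a = q * (q * P)"
      unfolding P_def by (metis power_Suc)
    moreover have "q ^ j \<le> P" and "q ^ l \<le> q * P"
      using that q3 unfolding P_def by (auto intro!: power_increasing simp flip: power_Suc)
    moreover have "1 \<le> P"
      using q3 unfolding P_def by simp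
    moreover have "3 * P \<le> q * P" and "3 * (q * P) \<le> q * (q * P)"
      using q3 by (metis mult_le_mono1)+
    ultimately show ?thesis
      by linarith
  qed
  show ?thesis
    using assms less[of j l] less[of l j] by (cases "j < l") (auto simp: add.commute)
qed

lemma pow_ne_two: "q ^ j \<noteq> 2"
  using q3 self_le_power[of q j] by (cases "j = 0") auto

context
  fixes a :: nat
  assumes a_pos: "0 < a"
begin

private lemma period: "[q ^ a = 1] (mod q ^ a - 1)"
  using q3 by (intro pow_cong_one_mod_pow_minus_one) simp

private lemmas cyc_eq_imp_cong_pow' = cyc_eq_imp_cong_pow[OF period a_pos]

lemma two_le_pow_minus_one: "2 \<le> q ^ a - 1"
  using q3 self_le_power[of q a] a_pos by simp

lemma one_plus_pow_mult_pow_mod: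
  assumes "j < a" and "0 < k" and "k < a"
  shows "(1 + q ^ k) * q ^ j mod (q ^ a - 1) = q ^ j + q ^ ((k + j) mod a)"
    and "j \<noteq> (k + j) mod a"
proof -
  show ne: "j \<noteq> (k + j) mod a"
    using assms by (cases "k + j < a") (auto simp: le_mod_geq)
  have "[(1 + q ^ k) * q ^ j = q ^ j + q ^ (k + j)] (mod q ^ a - 1)"
    by (simp add: algebra_simps power_add)
  also have "[q ^ j + q ^ (k + j) = q ^ j + q ^ ((k + j) mod a)] (mod q ^ a - 1)"
    by (intro cong_add cong_refl pow_cong_pow_mod[OF period a_pos])
  finally show "(1 + q ^ k) * q ^ j mod (q ^ a - 1) = q ^ j + q ^ ((k + j) mod a)"
    using pows_add_less_pow_minus_one[OF ne] assms by (simp add: cong_def)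
qed

lemma cyc_two_ne_one: "cyc q (q ^ a - 1) 2 \<noteq> cyc q (q ^ a - 1) 1"
proof
  assume "cyc q (q ^ a - 1) 2 = cyc q (q ^ a - 1) 1"
  then obtain j where "j < a" and "[2 = q ^ j] (mod q ^ a - 1)"
    using cyc_eq_imp_cong_pow'[of 2 1] by auto
  then have "2 mod (q ^ a - 1) = q ^ j"
    using pow_less_pow_minus_one by (simp add: cong_def)
  moreover have "2 mod (q ^ a - 1) = 0 \<or> 2 mod (q ^ a - 1) = 2"
    using two_le_pow_minus_one by (cases "q ^ a - 1 = 2") auto
  ultimately show False
    using pow_ne_two q3 by auto
qed

lemma cyc_one_plus_pow_ne_one:
  assumes "0 < k" and "k < a"
  shows "cyc q (q ^ a - 1) (1 + q ^ k) \<noteq> cyc q (q ^ a - 1) 1"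
proof
  assume "cyc q (q ^ a - 1) (1 + q ^ k) = cyc q (q ^ a - 1) 1"
  then obtain j where "j < a" and "[1 + q ^ k = q ^ j] (mod q ^ a - 1)"
    using cyc_eq_imp_cong_pow'[of "1 + q ^ k" 1] by auto
  moreover have "q ^ 0 + q ^ k < q ^ a - 1"
    using assms by (intro pows_add_less_pow_minus_one) auto
  ultimately have "1 + q ^ k = q ^ j"
    using pow_less_pow_minus_one by (simp add: cong_def)
  then show False
    using one_plus_pow_ne_pow assms q3 by simp
qed

lemma cyc_one_plus_pow_ne_two:
  assumes "0 < k" and "k < a"
  shows "cyc q (q ^ a - 1) (1 + q ^ k) \<noteq> cyc q (q ^ a - 1) 2"
proof
  assume eq: "cyc q (q ^ a - 1) (1 + q ^ k) = cyc q (q ^ a - 1) 2"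
  obtain j where j: "j < a" and "[2 = q ^ j * (1 + q ^ k)] (mod q ^ a - 1)"
    using cyc_eq_imp_cong_pow'[OF eq[symmetric]] by blast
  then have "2 mod (q ^ a - 1) = q ^ j + q ^ ((k + j) mod a)"
    using one_plus_pow_mult_pow_mod(1)[OF j assms] by (simp add: cong_def mult.commute)
  moreover have "4 \<le> q ^ j + q ^ ((k + j) mod a)"
  proof (cases "j = 0")
    case True
    then have "q \<le> q ^ ((k + j) mod a)"
      using one_plus_pow_mult_pow_mod(2)[OF j assms] q3 by (intro self_le_power) auto
    then show ?thesis
      using True q3 by simp
  next
    case False
    then have "q \<le> q ^ j"
      using q3 by (intro self_le_power) auto
    moreover have "1 \<le> q ^ ((k + j) mod a)"
      using q3 by simp
    ultimately show ?thesis
      using q3 by linarith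
  qed
  ultimately show False
    using mod_less_eq_dividend[of 2 "q ^ a - 1"] by linarith
qed

lemma cyc_one_plus_pow_inj:
  assumes "0 < k" "k \<le> a div 2" "0 < k'" "k' \<le> a div 2"
    and "cyc q (q ^ a - 1) (1 + q ^ k) = cyc q (q ^ a - 1) (1 + q ^ k')"
  shows "k = k'"
proof -
  have k'_less: "k' < a"
    using assms(4) a_pos by linarith
  obtain j where j: "j < a" and "[1 + q ^ k = q ^ j * (1 + q ^ k')] (mod q ^ a - 1)"
    using cyc_eq_imp_cong_pow'[OF assms(5)] by auto
  moreover have "q ^ 0 + q ^ k < q ^ a - 1"
    using assms a_pos by (intro pows_add_less_pow_minus_one) auto
  ultimately have "1 + q ^ k = q ^ j + q ^ ((k' + j) mod a)"
    using one_plus_pow_mult_pow_mod(1)[OF j assms(3) k'_less] by (simp add: cong_def mult.commute)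
  then consider "j = 0" "(k' + j) mod a = k" | "j = k" "(k' + j) mod a = 0"
    using one_plus_pow_eq_pows[of q k j "(k' + j) mod a"] q3 assms(1) by force
  then show ?thesis
  proof cases
    case 1
    then show ?thesis
      using k'_less by simp
  next
    case 2
    then have "a \<le> k' + k"
      using assms(1) by (simp add: dvd_imp_le mod_eq_0_iff_dvd)
    moreover have "2 * (a div 2) \<le> a"
      by simp
    ultimately show ?thesis
      using assms(2,4) by linarith
  qed
qed

lemma inj_on_cyc_coset_leaders: "inj_on (cyc q (q ^ a - 1)) (coset_leaders q a)"
proof -
  let ?C = "cyc q (q ^ a - 1)" and ?A = "(\<lambda>k. 1 + q ^ k) ` {1..a div 2}"
  have range: "0 < k" "k < a" if "k \<in> {1..a div 2}" for k
    using that a_pos by auto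
  have "inj_on ?C ?A"
  proof (rule inj_onI)
    fix x y assume "x \<in> ?A" "y \<in> ?A" and eq: "?C x = ?C y"
    then obtain k k' where k: "k \<in> {1..a div 2}" "x = 1 + q ^ k"
      and k': "k' \<in> {1..a div 2}" "y = 1 + q ^ k'"
      by blast
    have "k = k'"
      using k k' eq by (intro cyc_one_plus_pow_inj) auto
    then show "x = y"
      using k k' by simp
  qed
  moreover have "?C 1 \<notin> ?C ` insert 2 ?A" and "?C 2 \<notin> ?C ` ?A"
    using cyc_two_ne_one cyc_one_plus_pow_ne_one[OF range] cyc_one_plus_pow_ne_two[OF range]
    by (auto simp only: image_insert image_image insert_iff image_iff)
  moreover have "coset_leaders q a = insert 1 (insert 2 ?A)"
    unfolding coset_leaders_def by simp
  ultimately show ?thesis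
    by (simp only: inj_on_insert) blast
qed

lemma cyc_one_plus_pow_in_cyc_coset_leaders:
  "cyc q (q ^ a - 1) (1 + q ^ d) \<in> cyc q (q ^ a - 1) ` coset_leaders q a"
proof -
  let ?C = "cyc q (q ^ a - 1)"
  define k where "k = d mod a"
  have k_less: "k < a"
    using a_pos unfolding k_def by simp
  have "[1 + q ^ d = 1 + q ^ k] (mod q ^ a - 1)"
    unfolding k_def by (intro cong_add cong_refl pow_cong_pow_mod[OF period a_pos])
  then have C_eq: "?C (1 + q ^ d) = ?C (1 + q ^ k)"
    by (rule cyc_cong)
  consider "k = 0" | "1 \<le> k" "k \<le> a div 2" | "a div 2 < k"
    by linarith
  then show ?thesis
  proof cases
    case 1
    then have "?C (1 + q ^ d) = ?C 2"
      using C_eq by (simp add: numeral_2_eq_2)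
    then show ?thesis
      unfolding coset_leaders_def by blast
  next
    case 2
    then have "1 + q ^ k \<in> coset_leaders q a"
      unfolding coset_leaders_def by auto
    then show ?thesis
      using C_eq by (blast intro: image_eqI)
  next
    case 3
    have "?C (1 + q ^ k) = ?C (q ^ (a - k) * (1 + q ^ k))"
      by (rule cyc_pow_mult[OF period a_pos, symmetric])
    also have "q ^ (a - k) * (1 + q ^ k) = q ^ a + q ^ (a - k)"
      using k_less by (simp add: algebra_simps flip: power_add)
    also have "?C (q ^ a + q ^ (a - k)) = ?C (1 + q ^ (a - k))"
      by (intro cyc_cong cong_add cong_refl period)
    finally have "?C (1 + q ^ d) = ?C (1 + q ^ (a - k))"
      using C_eq by simp
    moreover have "1 \<le> a - k" and "a - k \<le> a div 2"
      using 3 k_less by presburger+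
    then have "1 + q ^ (a - k) \<in> coset_leaders q a"
      unfolding coset_leaders_def by auto
    ultimately show ?thesis
      by (blast intro: image_eqI)
  qed
qed

lemma cyc_Dstar_in_cyc_coset_leaders:
  assumes "(q ^ a - 1) dvd (q ^ m - 1)" and "e \<in> Dstar q m"
  shows "cyc q (q ^ a - 1) e \<in> cyc q (q ^ a - 1) ` coset_leaders q a"
proof -
  let ?C = "cyc q (q ^ a - 1)"
  note C_mod = cyc_mod_dvd[OF assms(1)]
  from assms(2) consider i where "e = q ^ i mod (q ^ m - 1)" | i where "e = 2 * q ^ i mod (q ^ m - 1)"
    | i j where "i < j" "e = (q ^ i + q ^ j) mod (q ^ m - 1)"
    unfolding Dstar_def Omega1_def B1_def B2_def by blast
  then show ?thesis
  proof cases
    case 1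
    then have "?C e = ?C (q ^ i * 1)"
      using C_mod by simp
    then show ?thesis
      unfolding coset_leaders_def cyc_pow_mult[OF period a_pos] by simp
  next
    case 2
    then have "?C e = ?C (q ^ i * 2)"
      using C_mod by (simp add: mult.commute)
    then show ?thesis
      unfolding coset_leaders_def cyc_pow_mult[OF period a_pos] by simp
  next
    case 3
    then have split: "q ^ i + q ^ j = q ^ i * (1 + q ^ (j - i))"
      by (simp add: algebra_simps flip: power_add)
    have "?C e = ?C (q ^ i + q ^ j)"
      using 3 C_mod by simp
    also have "\<dots> = ?C (1 + q ^ (j - i))"
      unfolding split by (rule cyc_pow_mult[OF period a_pos])
    finally show ?thesis
      using cyc_one_plus_pow_in_cyc_coset_leaders by simp
  qed
qed

lemma cyc_image_Dstar:
  assumes "(q ^ a - 1) dvd (q ^ m - 1)" and "a \<le> m"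
  shows "cyc q (q ^ a - 1) ` Dstar q m = cyc q (q ^ a - 1) ` coset_leaders q a"
proof
  show "cyc q (q ^ a - 1) ` Dstar q m \<subseteq> cyc q (q ^ a - 1) ` coset_leaders q a"
    using cyc_Dstar_in_cyc_coset_leaders[OF assms(1)] by blast
  show "cyc q (q ^ a - 1) ` coset_leaders q a \<subseteq> cyc q (q ^ a - 1) ` Dstar q m"
  proof
    fix C assume "C \<in> cyc q (q ^ a - 1) ` coset_leaders q a"
    then obtain x where "x \<in> coset_leaders q a" and "C = cyc q (q ^ a - 1) (x mod (q ^ m - 1))"
      using cyc_mod_dvd[OF assms(1)] by auto
    then show "C \<in> cyc q (q ^ a - 1) ` Dstar q m"
      using coset_leaders_mod_in_Dstar[OF _ a_pos assms(2)] by blast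
  qed
qed

lemma card_cyc_Dstar_mult:
  assumes "coprime u (q ^ a - 1)" and "(q ^ a - 1) dvd (q ^ m - 1)" and "a \<le> m"
  shows "card ((\<lambda>e. cyc q (q ^ a - 1) (e * u)) ` Dstar q m) = 2 + a div 2"
proof -
  have "card ((\<lambda>e. cyc q (q ^ a - 1) (e * u)) ` Dstar q m) = card (cyc q (q ^ a - 1) ` Dstar q m)"
    by (rule card_cyc_image_mult[OF assms(1)])
  also have "\<dots> = card (cyc q (q ^ a - 1) ` coset_leaders q a)"
    by (simp only: cyc_image_Dstar[OF assms(2,3)])
  also have "\<dots> = card (coset_leaders q a)"
    by (rule card_image[OF inj_on_cyc_coset_leaders])
  also have "\<dots> = 2 + a div 2"
    using q3 by (intro card_coset_leaders) simp
  finally show ?thesis .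
qed

end

end

section \<open>The isomorphism T and the sets of representatives\<close>

lemma B2_ge_four:
  assumes "3 \<le> q" and "x \<in> B2 q m"
  shows "4 \<le> x"
proof -
  obtain i j where ij: "i < j" "j < m" and x: "x = (q ^ i + q ^ j) mod (q ^ m - 1)"
    using assms(2) unfolding B2_def by blast
  then have "x = q ^ i + q ^ j"
    using pows_add_less_pow_minus_one[OF assms(1), of i j m] by simp
  moreover have "q \<le> q ^ j" and "1 \<le> q ^ i"
    using ij assms(1) self_le_power[of q j] by simp_all
  ultimately show ?thesis
    using assms(1) by linarith
qed

lemma card_split_B2:
  assumes "3 \<le> q" and "U \<subseteq> {1, 2} \<union> B2 q m" and "1 \<in> U" and "2 \<in> U" and "finite U"
  shows "card U = 2 + card (U \<inter> B2 q m)"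
proof -
  define V where "V = U \<inter> B2 q m"
  have "1 \<notin> V" and "2 \<notin> V"
    using B2_ge_four[OF assms(1)] unfolding V_def by fastforce+
  moreover have "finite V"
    using assms(5) unfolding V_def by simp
  ultimately have "card (insert 1 (insert 2 V)) = 2 + card V"
    by simp
  moreover have "U = insert 1 (insert 2 V)"
    using assms(2-4) unfolding V_def by auto
  ultimately show ?thesis
    unfolding V_def by simp
qed

lemma zn_iso_fst_mult:
  assumes "zn_iso n r1 r2 T" and "x < n"
  shows "fst (T x) = x * fst (T 1) mod r1"
proof -
  have bij: "bij_betw T {0..<n} ({0..<r1} \<times> {0..<r2})"
    and add: "\<forall>y<n. \<forall>z<n. T ((y + z) mod n) =
      ((fst (T y) + fst (T z)) mod r1, (snd (T y) + snd (T z)) mod r2)"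
    using assms(1) unfolding zn_iso_def by auto
  have fst_add: "fst (T ((y + z) mod n)) = (fst (T y) + fst (T z)) mod r1" if "y < n" "z < n" for y z
    using add that by simp
  have "T 0 \<in> {0..<r1} \<times> {0..<r2}"
    using bij_betwE[OF bij] assms(2) by simp
  then have "fst (T 0) < r1"
    by auto
  moreover have "(fst (T 0) + fst (T 0)) mod r1 = fst (T 0)"
    using fst_add[of 0 0] assms(2) by simp
  ultimately have "fst (T 0) = 0"
    by (cases "fst (T 0) + fst (T 0) < r1") (auto simp: le_mod_geq)
  then show ?thesis
    using assms(2)
  proof (induction x)
    case (Suc x)
    then have "fst (T (Suc x)) = (x * fst (T 1) mod r1 + fst (T 1)) mod r1"
      using fst_add[of x 1] by simp
    then show ?case
      by (simp add: mod_add_left_eq mod_add_right_eq add.commute)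
  qed simp
qed

lemma zn_iso_coprime_fst:
  assumes "zn_iso n r1 r2 T" and "0 < r1" and "0 < r2"
  shows "coprime (fst (T 1)) r1"
proof -
  have "(1 mod r1, 0) \<in> T ` {0..<n}"
    using assms unfolding zn_iso_def bij_betw_def by simp
  then obtain x where "x < n" and "T x = (1 mod r1, 0)"
    by auto
  then have "x * fst (T 1) mod r1 = 1 mod r1"
    using zn_iso_fst_mult[OF assms(1)] by (metis fst_conv)
  then have "[fst (T 1) * x = 1] (mod r1)"
    by (metis cong_def mult.commute)
  then show ?thesis
    by (auto simp: coprime_iff_invertible_nat)
qed

lemma zn_iso_fst_unit:
  assumes "zn_iso n r1 r2 T" and "0 < r1" and "0 < r2"
  obtains u where "coprime u r1" and "\<And>x. x < n \<Longrightarrow> fst (T x) = x * u mod r1"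
  using zn_iso_fst_mult[OF assms(1)] zn_iso_coprime_fst[OF assms] by blast

lemma complete_reps_by_key:
  assumes "complete_reps cls D R" and "\<forall>x\<in>D. \<forall>y\<in>D. x \<in> cls y \<longleftrightarrow> f x = f y"
  shows "inj_on f R" and "f ` R = f ` D"
proof -
  have R: "R \<subseteq> D" and unique: "\<forall>x\<in>D. \<exists>!y. y \<in> R \<and> x \<in> cls y"
    using assms(1) unfolding complete_reps_def by auto
  show "inj_on f R"
  proof (rule inj_onI)
    fix x y assume "x \<in> R" "y \<in> R" "f x = f y"
    then show "x = y"
      using R unique assms(2) by (metis subsetD)
  qed
  show "f ` R = f ` D"
  proof
    show "f ` D \<subseteq> f ` R"
      using R unique assms(2) by (fastforce simp: image_iff)
  qed (use R in auto)
qed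

lemma Dstar_mod: "x \<in> Dstar q m \<Longrightarrow> x mod (q ^ m - 1) = x"
  unfolding Dstar_def Omega1_def B1_def B2_def by auto

lemma Dstar_subset_lessThan:
  assumes "0 < q ^ m - 1"
  shows "Dstar q m \<subseteq> {..<q ^ m - 1}"
proof
  fix x assume "x \<in> Dstar q m"
  then have "x = x mod (q ^ m - 1)"
    by (rule Dstar_mod[symmetric])
  then show "x \<in> {..<q ^ m - 1}"
    using mod_less_divisor[OF assms, of x] by simp
qed

lemma Dstar_reps_subset:
  assumes "complete_reps (cyc q (q ^ m - 1)) (Dstar q m) Dbar" and "1 \<in> Dbar" and "2 \<in> Dbar"
  shows "Dbar \<subseteq> {1, 2} \<union> B2 q m"
proof
  fix x assume x: "x \<in> Dbar"
  have Dbar: "Dbar \<subseteq> Dstar q m" and unique: "\<forall>x\<in>Dstar q m. \<exists>!y. y \<in> Dbar \<and> x \<in> cyc q (q ^ m - 1) y"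
    using assms(1) unfolding complete_reps_def by auto
  then have "x \<in> cyc q (q ^ m - 1) x"
    using x mod_in_cyc[of x "q ^ m - 1" q] Dstar_mod by auto
  moreover have "x \<in> cyc q (q ^ m - 1) 1" if "x \<in> Omega1 q m"
    using that unfolding Omega1_def cyc_def by auto
  moreover have "x \<in> cyc q (q ^ m - 1) 2" if "x \<in> B1 q m"
    using that unfolding B1_def cyc_def by auto
  ultimately show "x \<in> {1, 2} \<union> B2 q m"
    using x assms(2,3) Dbar unique unfolding Dstar_def by blast
qed

lemma sim_reps_cyc_classes:
  fixes T :: "nat \<Rightarrow> nat \<times> nat"
  assumes Dbar: "suitable q n r1 r2 T D Dbar"
    and U: "complete_reps (\<lambda>y. {x \<in> Dbar. x mod r1 = y mod r1}) Dbar U"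
    and T1: "\<And>x. x < n \<Longrightarrow> fst (T x) = x * u mod r1" and u: "coprime u r1"
    and D: "D \<subseteq> {..<n}"
    and period: "[q ^ a = 1] (mod r1)" and a_pos: "0 < a"
  shows "inj_on (\<lambda>e. cyc q r1 (fst (T e))) U"
    and "(\<lambda>e. cyc q r1 (fst (T e))) ` U = (\<lambda>e. cyc q r1 (e * u)) ` D"
proof -
  have reps: "complete_reps (cyc q r1) (fst ` T ` D) (fst ` T ` Dbar)"
    using Dbar unfolding suitable_def restricted_reps_def by (simp add: image_image)
  have Dbar_sub: "Dbar \<subseteq> D"
    using Dbar unfolding suitable_def complete_reps_def by simp
  have "\<forall>x\<in>Dbar. \<forall>y\<in>Dbar. x \<in> {z \<in> Dbar. z mod r1 = y mod r1} \<longleftrightarrow> fst (T x) = fst (T y)"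
    using Dbar_sub D T1 cong_mult_rcancel_nat[OF u] by (auto simp: cong_def subset_iff)
  note U_key = complete_reps_by_key[OF U this]
  have "x \<in> cyc q r1 y \<longleftrightarrow> cyc q r1 x = cyc q r1 y" if "x \<in> fst ` T ` D" for x y
  proof -
    have "x mod r1 = x"
      using that D T1 by auto
    then show ?thesis
      using cyc_eq_iff_mod_in_cyc[OF period a_pos, of x y] by simp
  qed
  then have "\<forall>x\<in>fst ` T ` D. \<forall>y\<in>fst ` T ` D. x \<in> cyc q r1 y \<longleftrightarrow> cyc q r1 x = cyc q r1 y"
    by blast
  note T_key = complete_reps_by_key[OF reps this]
  have T1_image: "(\<lambda>e. fst (T e)) ` U = fst ` T ` Dbar"
    using U_key(2) by (simp add: image_image)
  show "inj_on (\<lambda>e. cyc q r1 (fst (T e))) U"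
    using comp_inj_on[OF U_key(1), of "cyc q r1"] T_key(1) T1_image by (simp add: o_def)
  have "(\<lambda>e. cyc q r1 (fst (T e))) ` U = cyc q r1 ` (\<lambda>e. fst (T e)) ` U"
    by (rule image_image[symmetric])
  also have "\<dots> = cyc q r1 ` fst ` T ` D"
    by (simp only: T1_image T_key(2))
  also have "\<dots> = (\<lambda>e. cyc q r1 (e * u)) ` D"
    using D T1 by (auto simp: image_image cyc_mod intro!: image_cong)
  finally show "(\<lambda>e. cyc q r1 (fst (T e))) ` U = (\<lambda>e. cyc q r1 (e * u)) ` D" .
qed

theorem mainTheorem5:
  fixes q m n r1 r2 a :: nat and T :: "nat \<Rightarrow> nat \<times> nat" and Dbar U :: "nat set"
  assumes "\<exists>p k. prime p \<and> k \<ge> 1 \<and> q = p ^ k"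
    and "q > 2" and "m \<ge> 1"
    and "n = q ^ m - 1" and "n = r1 * r2" and "r1 > 1" and "r2 > 1" and "coprime r1 r2"
    and "r1 = q ^ a - 1"
    and "zn_iso n r1 r2 T"
    and "suitable q n r1 r2 T (Dstar q m) Dbar" and "1 \<in> Dbar" and "2 \<in> Dbar"
    and "complete_reps (\<lambda>y. {x \<in> Dbar. x mod r1 = y mod r1}) Dbar U"
    and "1 \<in> U" and "2 \<in> U"
  shows "card U = 2 + card ((\<lambda>e. cyc q r1 (fst (T e))) ` (U \<inter> B2 q m))
       \<and> card U = 2 + a div 2"
proof -
  have q3: "3 \<le> q" and a_pos: "0 < a" and "r1 < n" and "0 < n"
    using assms(2,5,6,7,9) by (auto intro: gr0I)
  then have "q ^ a < q ^ m"
    using assms(4,9) by linarith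
  then have a_le: "a \<le> m"
    using q3 power_less_imp_less_exp[of q a m] by simp
  have r1_dvd: "r1 dvd q ^ m - 1"
    using assms(4,5) dvd_triv_left by metis
  have Dstar_less: "Dstar q m \<subseteq> {..<n}"
    using Dstar_subset_lessThan \<open>0 < n\<close> assms(4) by simp
  have Dbar: "complete_reps (cyc q (q ^ m - 1)) (Dstar q m) Dbar"
    using assms(4,11) unfolding suitable_def by simp
  have "U \<subseteq> Dbar"
    using assms(14) unfolding complete_reps_def by simp
  then have "finite U"
    using Dbar Dstar_less unfolding complete_reps_def by (meson finite_lessThan finite_subset order_trans)
  obtain u where u: "coprime u r1" and T1: "\<And>x. x < n \<Longrightarrow> fst (T x) = x * u mod r1"
    using zn_iso_fst_unit[OF assms(10)] assms(6,7) by auto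
  have period: "[q ^ a = 1] (mod r1)"
    using pow_cong_one_mod_pow_minus_one q3 assms(9) by simp
  note classes = sim_reps_cyc_classes[OF assms(11,14) T1 u Dstar_less period a_pos]
  have "card U = card ((\<lambda>e. cyc q r1 (e * u)) ` Dstar q m)"
    using card_image[OF classes(1)] classes(2) by simp
  also have "\<dots> = 2 + a div 2"
    using card_cyc_Dstar_mult[OF q3 a_pos u[unfolded assms(9)] r1_dvd[unfolded assms(9)] a_le]
    unfolding assms(9) .
  finally have "card U = 2 + a div 2" .
  moreover have "card U = 2 + card (U \<inter> B2 q m)"
    using Dstar_reps_subset[OF Dbar assms(12,13)] \<open>U \<subseteq> Dbar\<close>
    by (intro card_split_B2[OF q3 _ assms(15,16) \<open>finite U\<close>]) blast
  moreover have "card ((\<lambda>e. cyc q r1 (fst (T e))) ` (U \<inter> B2 q m)) = card (U \<inter> B2 q m)"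
    using card_image inj_on_subset[OF classes(1)] by blast
  ultimately show ?thesis
    by simp
qed

end
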